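(* Let $\kappa>0$, $\mu>0$, and set $\sigma=\sqrt{\mu/\kappa}$. Fix a real constant $K_1$ and a choice of sign (the same in each formula below). For $0<\tau<1/\mu$ define \[ \tilde q_0(x)=\sqrt2\,\sigma\,\mathrm{sech}\big(\sqrt{\mu(1-\mu\tau)}\,x\pm K_1\big), \] \[ \tilde q_1(x)=-\frac{\sqrt{2\mu}\,\sigma}{\sqrt{1-\mu\tau}}\,\mathrm{sech}\big(\sqrt{\mu(1-\mu\tau)}\,x\pm K_1\big)\tanh\big(\sqrt{\mu(1-\mu\tau)}\,x\pm K_1\big), \] which give standing solitary-wave solutions $e^{i\mu t}(\tilde q_0(x),\tilde q_1(x))$ of the NLSH system $i\partial_tq_0+\partial_xq_1=-\kappa|q_0|^2q_0$, $i\tau\partial_tq_1=\partial_xq_0-q_1$, and let \[ u^+(x)=\sqrt2\,\sigma\,\mathrm{sech}\big(\sqrt{\mu}\,x\pm K_1\big) \] (the amplitude of the bright-soliton ground state $e^{i\mu t}u^+(x)$ of the NLS equation $iu_t+u_{xx}+\kappa|u|^2u=0$). Then as $\tau\to0$, $\{\tilde q_0\}$ converges uniformly on $\mathbb{R}$ to $u^+$ at a rate linear in $\tau$, and $\{\tilde q_1\}$ converges uniformly on $\mathbb{R}$ to $(u^+)'$ at a rate linear in $\tau$.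
   Context: Standing-wave ansatz: $(q_0,q_1)(x,t)=e^{i\mu t}(\tilde q_0(x),\tilde q_1(x))$ with $\mu\in\mathbb{R}$, which reduces NLSH to $\tilde q_0'=(1-\mu\tau)\tilde q_1$, $\tilde q_1'=(\mu-\kappa\tilde q_0^2)\tilde q_0$. *)

theory Defs
  imports "HOL-Analysis.Analysis"
begin

definition sech :: "real \<Rightarrow> real" where
  "sech x = 1 / cosh x"

text \<open>Standing-wave amplitudes; s is the sign (1 or -1) in front of K1.\<close>

definition q0_tilde :: "real \<Rightarrow> real \<Rightarrow> real \<Rightarrow> real \<Rightarrow> real \<Rightarrow> real \<Rightarrow> real" where
  "q0_tilde \<kappa> \<mu> K1 s \<tau> x =
     sqrt 2 * sqrt (\<mu> / \<kappa>) * sech (sqrt (\<mu> * (1 - \<mu> * \<tau>)) * x + s * K1)"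

definition q1_tilde :: "real \<Rightarrow> real \<Rightarrow> real \<Rightarrow> real \<Rightarrow> real \<Rightarrow> real \<Rightarrow> real" where
  "q1_tilde \<kappa> \<mu> K1 s \<tau> x =
     - (sqrt (2 * \<mu>) * sqrt (\<mu> / \<kappa>) / sqrt (1 - \<mu> * \<tau>))
       * sech (sqrt (\<mu> * (1 - \<mu> * \<tau>)) * x + s * K1)
       * tanh (sqrt (\<mu> * (1 - \<mu> * \<tau>)) * x + s * K1)"

definition u_plus :: "real \<Rightarrow> real \<Rightarrow> real \<Rightarrow> real \<Rightarrow> real \<Rightarrow> real" where
  "u_plus \<kappa> \<mu> K1 s x = sqrt 2 * sqrt (\<mu> / \<kappa>) * sech (sqrt \<mu> * x + s * K1)"

end

(*
  With t = sqrt (1 - \<mu> \<tau>), the profile q0_tilde is u_plus with the argument of sech dilated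
  by t, and q1_tilde is deriv u_plus with the argument of sech * tanh dilated by t and an
  extra factor 1/t. For a profile f with |f'(w)| <= M exp(-|w|), the mean value theorem in
  the dilation parameter gives |f(t y + c) - f(y + c)| <= M exp|c| (1 - t)/t uniformly in y:
  the factor |y| produced by the chain rule is absorbed by the exponential decay. Since
  (1 - t)/t <= 2 \<mu> \<tau> for small \<tau>, both differences are O(\<tau>) uniformly in x.
*)

theory Submission
  imports Defs
begin

lemma sech_pos: "0 < sech x"
  by (simp add: sech_def)

lemma sech_le_1: "sech x \<le> 1"
  using cosh_real_ge_1[of x] by (simp add: sech_def)

lemma sech_le_exp: "sech x \<le> 2 * exp (- \<bar>x\<bar>)"
proof -
  have "exp \<bar>x\<bar> \<le> 2 * cosh x"
    by (simp add: cosh_def abs_if)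
  then show ?thesis
    by (simp add: sech_def exp_minus field_simps)
qed

lemma abs_tanh_le_1: "\<bar>tanh (x::real)\<bar> \<le> 1"
  using tanh_real_bounds[of x] by auto

lemma abs_sech_mult_le_exp:
  assumes "\<bar>y\<bar> \<le> 1"
  shows "\<bar>sech x * y\<bar> \<le> 2 * exp (- \<bar>x\<bar>)"
proof -
  have "\<bar>sech x * y\<bar> \<le> sech x"
    using assms sech_pos[of x] by (simp add: abs_mult mult_left_le)
  then show ?thesis
    using sech_le_exp by (rule order_trans)
qed

lemma has_real_derivative_sech: "(sech has_real_derivative - (sech x * tanh x)) (at x)"
  unfolding sech_def[abs_def]
  by (auto intro!: derivative_eq_intros simp: tanh_def power2_eq_square field_simps)

lemma has_real_derivative_sech_tanh:
  "((\<lambda>x. sech x * tanh x) has_real_derivative sech x * (1 - 2 * tanh x ^ 2)) (at x)"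
  by (auto intro!: derivative_eq_intros has_real_derivative_sech[THEN DERIV_chain2]
      simp: algebra_simps power2_eq_square)

lemma abs_diff_dilation_le:
  fixes f f' :: "real \<Rightarrow> real"
  assumes f': "\<And>w. (f has_real_derivative f' w) (at w)"
    and decay: "\<And>w. \<bar>f' w\<bar> \<le> M * exp (- \<bar>w\<bar>)"
    and t: "0 < t" "t \<le> 1"
  shows "\<bar>f (t * y + c) - f (y + c)\<bar> \<le> M * exp \<bar>c\<bar> * ((1 - t) / t)"
proof (cases "t = 1")
  case False
  then have "t < 1" using t by simp
  have "((\<lambda>r. f (r * y + c)) has_real_derivative f' (r * y + c) * y) (at r)" for r
    by (rule DERIV_chain2[OF f']) (auto intro!: derivative_eq_intros)
  from MVT2[OF \<open>t < 1\<close> this]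
  obtain z where z: "t < z" "z < 1" and mvt: "f (y + c) - f (t * y + c) = (1 - t) * (f' (z * y + c) * y)"
    by auto
  have "- \<bar>z * y + c\<bar> \<le> \<bar>c\<bar> + - (z * \<bar>y\<bar>)"
    using z t by (simp add: abs_mult)
  then have "\<bar>y\<bar> * exp (- \<bar>z * y + c\<bar>) \<le> exp \<bar>c\<bar> * (\<bar>y\<bar> * exp (- (z * \<bar>y\<bar>)))"
    by (simp add: mult_left_mono mult.left_commute flip: exp_add)
  also have "\<bar>y\<bar> * exp (- (z * \<bar>y\<bar>)) \<le> 1 / z"
  proof -
    have "z * \<bar>y\<bar> \<le> exp (z * \<bar>y\<bar>)"
      using exp_ge_add_one_self[of "z * \<bar>y\<bar>"] by linarith
    then show ?thesis
      using z t by (simp add: exp_minus field_simps)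
  qed
  also have "1 / z \<le> 1 / t"
    using z t by (simp add: frac_le)
  finally have "\<bar>y\<bar> * exp (- \<bar>z * y + c\<bar>) \<le> exp \<bar>c\<bar> / t"
    by (simp add: mult_left_mono)
  have "\<bar>f (t * y + c) - f (y + c)\<bar> = (1 - t) * (\<bar>y\<bar> * \<bar>f' (z * y + c)\<bar>)"
    using mvt t by (simp add: abs_minus_commute abs_mult)
  also have "\<dots> \<le> (1 - t) * (\<bar>y\<bar> * (M * exp (- \<bar>z * y + c\<bar>)))"
    using decay t by (intro mult_left_mono) auto
  also have "\<dots> = (1 - t) * (M * (\<bar>y\<bar> * exp (- \<bar>z * y + c\<bar>)))"
    by (simp add: mult_ac)
  also have "\<dots> \<le> (1 - t) * (M * (exp \<bar>c\<bar> / t))"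
    using \<open>\<bar>y\<bar> * exp (- \<bar>z * y + c\<bar>) \<le> exp \<bar>c\<bar> / t\<close> decay[of 0] t
    by (intro mult_left_mono) auto
  finally show ?thesis
    by (simp add: field_simps)
qed (simp)

lemma sqrt_one_minus_bounds:
  assumes "0 \<le> h" "h \<le> 3/4"
  shows "0 < sqrt (1 - h)" "sqrt (1 - h) \<le> 1" "(1 - sqrt (1 - h)) / sqrt (1 - h) \<le> 2 * h"
proof -
  define t where "t = sqrt (1 - h)"
  have "1/2 \<le> t"
    using assms real_sqrt_le_mono[of "1/4" "1 - h"] by (simp add: t_def real_sqrt_divide)
  moreover have "t \<le> 1" "t\<^sup>2 = 1 - h"
    using assms by (simp_all add: t_def)
  moreover have "1 - t \<le> 1 - t\<^sup>2"
    using \<open>1/2 \<le> t\<close> \<open>t \<le> 1\<close> by (simp add: power2_eq_square mult_left_le)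
  moreover have "h * 1 \<le> h * (2 * t)"
    using \<open>1/2 \<le> t\<close> assms(1) by (intro mult_left_mono) auto
  ultimately show "0 < sqrt (1 - h)" "sqrt (1 - h) \<le> 1" "(1 - sqrt (1 - h)) / sqrt (1 - h) \<le> 2 * h"
    by (auto simp: t_def[symmetric] divide_le_eq)
qed

lemma uniform_limit_of_null_dist_bound:
  assumes "(r \<longlongrightarrow> 0) F" "\<forall>\<^sub>F n in F. \<forall>x\<in>S. dist (f n x) (g x) \<le> r n"
  shows "uniform_limit S f g F"
proof (rule uniform_limitI)
  fix e :: real
  assume "0 < e"
  with assms(1) have "\<forall>\<^sub>F n in F. r n < e"
    by (rule order_tendstoD)
  with assms(2) show "\<forall>\<^sub>F n in F. \<forall>x\<in>S. dist (f n x) (g x) < e"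
    by eventually_elim (auto intro: le_less_trans)
qed

lemma deriv_u_plus:
  "deriv (u_plus \<kappa> \<mu> K1 s) x =
     - (sqrt 2 * sqrt (\<mu> / \<kappa>) * sqrt \<mu>) * (sech (sqrt \<mu> * x + s * K1) * tanh (sqrt \<mu> * x + s * K1))"
proof (rule DERIV_imp_deriv)
  show "(u_plus \<kappa> \<mu> K1 s has_real_derivative
      - (sqrt 2 * sqrt (\<mu> / \<kappa>) * sqrt \<mu>) * (sech (sqrt \<mu> * x + s * K1) * tanh (sqrt \<mu> * x + s * K1))) (at x)"
    unfolding u_plus_def[abs_def]
    by (auto intro!: derivative_eq_intros has_real_derivative_sech[THEN DERIV_chain2])
qed

lemma abs_q0_tilde_minus_u_plus_le:
  assumes "0 < \<mu>" "0 < \<tau>" "\<mu> * \<tau> \<le> 3/4"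
  shows "\<bar>q0_tilde \<kappa> \<mu> K1 s \<tau> x - u_plus \<kappa> \<mu> K1 s x\<bar>
    \<le> 4 * \<bar>sqrt 2 * sqrt (\<mu> / \<kappa>)\<bar> * exp \<bar>s * K1\<bar> * \<mu> * \<tau>"
proof -
  define t where "t = sqrt (1 - \<mu> * \<tau>)"
  define y where "y = sqrt \<mu> * x"
  have t: "0 < t" "t \<le> 1" "(1 - t) / t \<le> 2 * (\<mu> * \<tau>)"
    using sqrt_one_minus_bounds[of "\<mu> * \<tau>"] assms by (simp_all add: t_def)
  have arg: "sqrt (\<mu> * (1 - \<mu> * \<tau>)) * x = t * y"
    by (simp add: t_def y_def real_sqrt_mult)
  have "\<bar>sech (t * y + s * K1) - sech (y + s * K1)\<bar> \<le> 2 * exp \<bar>s * K1\<bar> * ((1 - t) / t)"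
    using has_real_derivative_sech abs_sech_mult_le_exp[OF abs_tanh_le_1] t
    by (intro abs_diff_dilation_le) auto
  also have "\<dots> \<le> 2 * exp \<bar>s * K1\<bar> * (2 * (\<mu> * \<tau>))"
    using t(3) by (intro mult_left_mono) auto
  finally have sech_diff: "\<bar>sech (t * y + s * K1) - sech (y + s * K1)\<bar> \<le> 4 * exp \<bar>s * K1\<bar> * \<mu> * \<tau>"
    by simp
  have "q0_tilde \<kappa> \<mu> K1 s \<tau> x - u_plus \<kappa> \<mu> K1 s x
      = sqrt 2 * sqrt (\<mu> / \<kappa>) * (sech (t * y + s * K1) - sech (y + s * K1))"
    unfolding q0_tilde_def u_plus_def arg y_def by (simp add: right_diff_distrib)
  then show ?thesis
    using mult_left_mono[OF sech_diff abs_ge_zero[of "sqrt 2 * sqrt (\<mu> / \<kappa>)"]]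
    by (simp add: abs_mult mult_ac)
qed

lemma abs_q1_tilde_minus_deriv_u_plus_le:
  assumes "0 < \<mu>" "0 < \<tau>" "\<mu> * \<tau> \<le> 3/4"
  shows "\<bar>q1_tilde \<kappa> \<mu> K1 s \<tau> x - deriv (u_plus \<kappa> \<mu> K1 s) x\<bar>
    \<le> \<bar>sqrt 2 * sqrt (\<mu> / \<kappa>) * sqrt \<mu>\<bar> * (2 + 4 * exp \<bar>s * K1\<bar>) * \<mu> * \<tau>"
proof -
  define t where "t = sqrt (1 - \<mu> * \<tau>)"
  define y where "y = sqrt \<mu> * x"
  define g where "g w = sech w * tanh w" for w :: real
  have t: "0 < t" "t \<le> 1" "(1 - t) / t \<le> 2 * (\<mu> * \<tau>)"
    using sqrt_one_minus_bounds[of "\<mu> * \<tau>"] assms by (simp_all add: t_def)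
  have arg: "sqrt (\<mu> * (1 - \<mu> * \<tau>)) * x = t * y"
    by (simp add: t_def y_def real_sqrt_mult)
  have g_le: "\<bar>g w\<bar> \<le> 1" for w
    using abs_tanh_le_1[of w] sech_pos[of w] sech_le_1[of w]
    by (auto simp: g_def abs_mult intro: mult_le_one)
  have "\<bar>1 - 2 * tanh w ^ 2\<bar> \<le> 1" for w :: real
    using abs_tanh_le_1[of w] abs_square_le_1[of "tanh w"] zero_le_power2[of "tanh w"]
    by (simp add: abs_le_iff)
  then have g_diff: "\<bar>g (t * y + s * K1) - g (y + s * K1)\<bar> \<le> 2 * exp \<bar>s * K1\<bar> * ((1 - t) / t)"
    using has_real_derivative_sech_tanh abs_sech_mult_le_exp t unfolding g_def
    by (intro abs_diff_dilation_le) auto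
  have "0 \<le> (1 - t) / t"
    using t by simp
  then have "\<bar>g (t * y + s * K1) * ((1 - t) / t)\<bar> \<le> 1 * ((1 - t) / t)"
    unfolding abs_mult abs_of_nonneg[OF \<open>0 \<le> (1 - t) / t\<close>] by (rule mult_right_mono[OF g_le])
  then have "\<bar>g (t * y + s * K1) * ((1 - t) / t) + (g (t * y + s * K1) - g (y + s * K1))\<bar>
      \<le> 1 * ((1 - t) / t) + 2 * exp \<bar>s * K1\<bar> * ((1 - t) / t)"
    using g_diff by (intro abs_triangle_ineq[THEN order_trans] add_mono)
  also have "\<dots> = (1 + 2 * exp \<bar>s * K1\<bar>) * ((1 - t) / t)"
    by (simp only: distrib_right)
  also have "\<dots> \<le> (1 + 2 * exp \<bar>s * K1\<bar>) * (2 * (\<mu> * \<tau>))"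
    using t(3) by (intro mult_left_mono) auto
  also have "g (t * y + s * K1) * ((1 - t) / t) + (g (t * y + s * K1) - g (y + s * K1))
      = g (t * y + s * K1) / t - g (y + s * K1)"
    using t by (simp add: field_simps)
  finally have g_rate: "\<bar>g (t * y + s * K1) / t - g (y + s * K1)\<bar> \<le> (2 + 4 * exp \<bar>s * K1\<bar>) * \<mu> * \<tau>"
    by (simp add: algebra_simps)
  have "q1_tilde \<kappa> \<mu> K1 s \<tau> x - deriv (u_plus \<kappa> \<mu> K1 s) x
      = - (sqrt 2 * sqrt (\<mu> / \<kappa>) * sqrt \<mu>) * (g (t * y + s * K1) / t - g (y + s * K1))"
    unfolding q1_tilde_def deriv_u_plus arg t_def[symmetric] y_def[symmetric] g_def
    by (simp add: real_sqrt_mult right_diff_distrib)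
  then show ?thesis
    using mult_left_mono[OF g_rate abs_ge_zero[of "sqrt 2 * sqrt (\<mu> / \<kappa>) * sqrt \<mu>"]]
    by (simp add: abs_mult mult_ac)
qed

lemma uniform_limit_at_right_0_of_linear_rate:
  fixes f :: "real \<Rightarrow> 'a \<Rightarrow> real"
  assumes "\<forall>\<^sub>F \<tau> in at_right 0. \<forall>x. \<bar>f \<tau> x - g x\<bar> \<le> C * \<tau>"
  shows "uniform_limit UNIV f g (at_right 0)"
proof (rule uniform_limit_of_null_dist_bound)
  show "((\<lambda>\<tau>. C * \<tau>) \<longlongrightarrow> 0) (at_right 0)"
    by (auto intro!: tendsto_eq_intros)
  show "\<forall>\<^sub>F \<tau> in at_right 0. \<forall>x\<in>UNIV. dist (f \<tau> x) (g x) \<le> C * \<tau>"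
    using assms by (simp add: dist_real_def)
qed

theorem proposition2:
  fixes \<kappa> \<mu> K1 s :: real
  assumes "\<kappa> > 0" and "\<mu> > 0" and "s = 1 \<or> s = -1"
  shows "uniform_limit UNIV (\<lambda>\<tau> x. q0_tilde \<kappa> \<mu> K1 s \<tau> x) (u_plus \<kappa> \<mu> K1 s) (at_right 0)
       \<and> (\<exists>C. \<forall>\<^sub>F \<tau> in at_right 0.
              \<forall>x. \<bar>q0_tilde \<kappa> \<mu> K1 s \<tau> x - u_plus \<kappa> \<mu> K1 s x\<bar> \<le> C * \<tau>)
       \<and> uniform_limit UNIV (\<lambda>\<tau> x. q1_tilde \<kappa> \<mu> K1 s \<tau> x) (deriv (u_plus \<kappa> \<mu> K1 s)) (at_right 0)
       \<and> (\<exists>C. \<forall>\<^sub>F \<tau> in at_right 0.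
              \<forall>x. \<bar>q1_tilde \<kappa> \<mu> K1 s \<tau> x - deriv (u_plus \<kappa> \<mu> K1 s) x\<bar> \<le> C * \<tau>)"
proof -
  have "\<forall>\<^sub>F \<tau> in at_right 0. \<tau> \<in> {0<..<3 / (4 * \<mu>)}"
    using assms(2) by (intro eventually_at_right_real) simp
  then have small: "\<forall>\<^sub>F \<tau> in at_right 0. 0 < \<tau> \<and> \<mu> * \<tau> \<le> 3/4"
    by eventually_elim (use assms(2) in \<open>simp add: field_simps\<close>)
  define A where "A = sqrt 2 * sqrt (\<mu> / \<kappa>)"
  have q0_rate: "\<forall>\<^sub>F \<tau> in at_right 0. \<forall>x. \<bar>q0_tilde \<kappa> \<mu> K1 s \<tau> x - u_plus \<kappa> \<mu> K1 s x\<bar>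
      \<le> (4 * \<bar>A\<bar> * exp \<bar>s * K1\<bar> * \<mu>) * \<tau>"
    using small by eventually_elim (use abs_q0_tilde_minus_u_plus_le assms(2) in \<open>auto simp: A_def\<close>)
  have q1_rate: "\<forall>\<^sub>F \<tau> in at_right 0. \<forall>x. \<bar>q1_tilde \<kappa> \<mu> K1 s \<tau> x - deriv (u_plus \<kappa> \<mu> K1 s) x\<bar>
      \<le> (\<bar>A * sqrt \<mu>\<bar> * (2 + 4 * exp \<bar>s * K1\<bar>) * \<mu>) * \<tau>"
    using small by eventually_elim (use abs_q1_tilde_minus_deriv_u_plus_le assms(2) in \<open>auto simp: A_def\<close>)
  show ?thesis
    using q0_rate q1_rate uniform_limit_at_right_0_of_linear_rate by blast
qed

end
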